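(* Let $\psi\in C^\infty(P)$ be strongly convex and for $s\in\mathbb R$ let $g_s=g_P+s\psi$ with Hessian $H_s$ on $\check P$. Then for each vertex $v$ of $P$ and each $s\in\mathbb R$ there is a positive-definite island of $g_s$ containing $v$; that is, there exists a connected open neighbourhood $U^v_s$ of $v$ in $P$ such that $H_s(x)$ is positive definite for all $x\in U^v_s\cap\check P$.
   Context: Let $P=\{x\in\mathbb R^n:\ell_j(x)=\langle\nu_j,x\rangle+\lambda_j\ge0,\ j=1,\dots,r\}$ be a Delzant polytope (with primitive inward normals $\nu_j$) with interior $\check P$, and $g_P=\frac12\sum_{j=1}^r\ell_j\log\ell_j$ on $\check P$. Strongly convex means the Hessian of $\psi$ is positive definite on $P$. Positive-definite islands are the connected open regions of $P$ on which $H_s$ is positive definite. *)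

theory Defs
  imports "HOL-Analysis.Analysis"
begin

primrec pd :: "'n::finite list \<Rightarrow> (real^'n \<Rightarrow> real) \<Rightarrow> real^'n \<Rightarrow> real" where
  "pd [] f = f"
| "pd (i # is) f = (\<lambda>x. deriv (\<lambda>t. pd is f (x + t *\<^sub>R axis i 1)) 0)"

definition smooth_on :: "(real^'n::finite) set \<Rightarrow> (real^'n \<Rightarrow> real) \<Rightarrow> bool" where
  "smooth_on S f \<longleftrightarrow> open S \<and>
     (\<forall>is. continuous_on S (pd is f) \<and>
       (\<forall>i. \<forall>x\<in>S. (\<lambda>t. pd is f (x + t *\<^sub>R axis i 1)) differentiable (at 0)))"

definition hess :: "(real^'n::finite \<Rightarrow> real) \<Rightarrow> real^'n \<Rightarrow> real^'n^'n" where
  "hess f x = (\<chi> i j. pd [i, j] f x)"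

definition pos_def :: "real^'n^'n::finite \<Rightarrow> bool" where
  "pos_def A \<longleftrightarrow> transpose A = A \<and> (\<forall>y. y \<noteq> 0 \<longrightarrow> y \<bullet> (A *v y) > 0)"

definition lfun :: "(nat \<Rightarrow> real^'n::finite) \<Rightarrow> (nat \<Rightarrow> real) \<Rightarrow> nat \<Rightarrow> real^'n \<Rightarrow> real" where
  "lfun nu lam j x = nu j \<bullet> x + lam j"

definition polytope_of :: "(nat \<Rightarrow> real^'n::finite) \<Rightarrow> (nat \<Rightarrow> real) \<Rightarrow> nat \<Rightarrow> (real^'n) set" where
  "polytope_of nu lam r = {x. \<forall>j<r. lfun nu lam j x \<ge> 0}"

definition integral_vec :: "real^'n::finite \<Rightarrow> bool" where
  "integral_vec z \<longleftrightarrow> (\<forall>i. z $ i \<in> \<int>)"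

definition primitive_vec :: "real^'n::finite \<Rightarrow> bool" where
  "primitive_vec z \<longleftrightarrow> integral_vec z \<and>
     (\<forall>k::int. k > 0 \<longrightarrow> integral_vec ((1 / of_int k) *\<^sub>R z) \<longrightarrow> k = 1)"

text \<open>Delzant polytope given by r inequalities (one per facet) with primitive inward normals:
  bounded, full-dimensional, each inequality cuts out a distinct facet, and at every
  vertex exactly n facets meet, their normals forming a Z-basis of Z^n.\<close>
definition delzant :: "(nat \<Rightarrow> real^'n::finite) \<Rightarrow> (nat \<Rightarrow> real) \<Rightarrow> nat \<Rightarrow> bool" where
  "delzant nu lam r \<longleftrightarrow>
    (let P = polytope_of nu lam r in
      bounded P \<and> interior P \<noteq> {} \<and>
      (\<forall>j<r. primitive_vec (nu j)) \<and>
      (\<forall>j<r. {x\<in>P. lfun nu lam j x = 0} facet_of P) \<and>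
      inj_on (\<lambda>j. {x\<in>P. lfun nu lam j x = 0}) {..<r} \<and>
      (\<forall>v. v extreme_point_of P \<longrightarrow>
         (let J = {j. j < r \<and> lfun nu lam j v = 0} in
            card J = CARD('n) \<and>
            (\<forall>z. integral_vec z \<longrightarrow> (\<exists>c::nat \<Rightarrow> int. z = (\<Sum>j\<in>J. of_int (c j) *\<^sub>R nu j))))))"

definition gP :: "(nat \<Rightarrow> real^'n::finite) \<Rightarrow> (nat \<Rightarrow> real) \<Rightarrow> nat \<Rightarrow> real^'n \<Rightarrow> real" where
  "gP nu lam r x = (1/2) * (\<Sum>j<r. lfun nu lam j x * ln (lfun nu lam j x))"

end

theory Submission
  imports Defs
begin

text \<open>In the interior the Hessian of \<open>g\<^sub>P\<close> is \<open>1/2 \<Sum>\<^sub>j \<nu>\<^sub>j \<nu>\<^sub>j\<^sup>T / \<ell>\<^sub>j\<close>. At a vertex \<open>v\<close>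
  the normals of the facets through \<open>v\<close> span \<open>\<real>\<^sup>n\<close> (Delzant condition), so
  \<open>\<Sum>\<^bsub>j\<in>J\<^esub> (\<nu>\<^sub>j \<bullet> y)\<^sup>2 \<ge> c |y|\<^sup>2\<close>, while \<open>\<ell>\<^sub>j(x) \<rightarrow> 0\<close> for these \<open>j\<close> as \<open>x \<rightarrow> v\<close>.
  Hence the quadratic form of \<open>g\<^sub>P\<close> is at least \<open>c |y|\<^sup>2 / (2 \<Sum>\<^bsub>j\<in>J\<^esub> \<ell>\<^sub>j(x))\<close>, which
  near \<open>v\<close> dominates the bounded perturbation \<open>s \<cdot> Hess \<psi>\<close> whatever the sign of \<open>s\<close>.
  The island is \<open>P\<close> intersected with a small ball, connected because \<open>P\<close> is convex.\<close>

lemma lfun_add_scaleR_axis: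
  "lfun nu lam j (y + t *\<^sub>R axis k 1) = lfun nu lam j y + t * nu j $ k"
  by (simp add: lfun_def inner_add_right inner_axis)

lemma has_real_derivative_xlnx_line:
  fixes a b :: real
  assumes "a > 0"
  shows "((\<lambda>t. (a + t * b) * ln (a + t * b)) has_real_derivative b * (ln a + 1)) (at 0)"
  using assms by (auto intro!: derivative_eq_intros simp: field_simps)

lemma has_real_derivative_ln_line:
  fixes a b :: real
  assumes "a > 0"
  shows "((\<lambda>t. ln (a + t * b)) has_real_derivative b / a) (at 0)"
  using assms by (auto intro!: derivative_eq_intros simp: field_simps)

lemma has_real_derivative_pd_axis:
  assumes "smooth_on W f" and "x \<in> W"
  shows "((\<lambda>t. pd is f (x + t *\<^sub>R axis i 1)) has_real_derivative pd (i # is) f x) (at 0)"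
proof -
  have "(\<lambda>t. pd is f (x + t *\<^sub>R axis i 1)) differentiable at 0"
    using assms unfolding smooth_on_def by blast
  then show ?thesis
    by (simp only: pd.simps(2) DERIV_deriv_iff_real_differentiable)
qed

lemma pd_gP_plus:
  fixes nu :: "nat \<Rightarrow> real^'n::finite"
  assumes pos: "\<forall>j<r. lfun nu lam j y > 0" and psi: "smooth_on W psi" and "y \<in> W"
  shows "pd [k] (\<lambda>y. gP nu lam r y + s * psi y) y =
     (1/2) * (\<Sum>j<r. nu j $ k * (ln (lfun nu lam j y) + 1)) + s * pd [k] psi y"
proof -
  have "((\<lambda>t. lfun nu lam j (y + t *\<^sub>R axis k 1) * ln (lfun nu lam j (y + t *\<^sub>R axis k 1)))
      has_real_derivative nu j $ k * (ln (lfun nu lam j y) + 1)) (at 0)" if "j < r" for j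
    unfolding lfun_add_scaleR_axis using pos that by (intro has_real_derivative_xlnx_line) auto
  then have "((\<lambda>t. \<Sum>j<r. lfun nu lam j (y + t *\<^sub>R axis k 1) * ln (lfun nu lam j (y + t *\<^sub>R axis k 1)))
      has_real_derivative (\<Sum>j<r. nu j $ k * (ln (lfun nu lam j y) + 1))) (at 0)"
    by (intro DERIV_sum) auto
  moreover have "((\<lambda>t. psi (y + t *\<^sub>R axis k 1)) has_real_derivative pd [k] psi y) (at 0)"
    using has_real_derivative_pd_axis[OF psi \<open>y \<in> W\<close>, of "[]" k] by simp
  ultimately have "((\<lambda>t. gP nu lam r (y + t *\<^sub>R axis k 1) + s * psi (y + t *\<^sub>R axis k 1))
      has_real_derivative (1/2) * (\<Sum>j<r. nu j $ k * (ln (lfun nu lam j y) + 1)) + s * pd [k] psi y) (at 0)"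
    unfolding gP_def by (intro DERIV_add DERIV_cmult)
  then show ?thesis
    by (simp add: DERIV_imp_deriv)
qed

lemma pd2_gP_plus:
  fixes nu :: "nat \<Rightarrow> real^'n::finite"
  assumes "open S" and "x \<in> S" and pos: "\<forall>y\<in>S. \<forall>j<r. lfun nu lam j y > 0"
    and "S \<subseteq> W" and psi: "smooth_on W psi"
  shows "pd [i, k] (\<lambda>y. gP nu lam r y + s * psi y) x =
     (1/2) * (\<Sum>j<r. nu j $ i * nu j $ k / lfun nu lam j x) + s * pd [i, k] psi x"
proof -
  define F where "F y = (1/2) * (\<Sum>j<r. nu j $ k * (ln (lfun nu lam j y) + 1)) + s * pd [k] psi y" for y
  have F_eq: "pd [k] (\<lambda>y. gP nu lam r y + s * psi y) y = F y" if "y \<in> S" for y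
    unfolding F_def using pos that \<open>S \<subseteq> W\<close> by (intro pd_gP_plus[OF _ psi]) auto
  have "((\<lambda>t. nu j $ k * (ln (lfun nu lam j (x + t *\<^sub>R axis i 1)) + 1))
      has_real_derivative nu j $ i * nu j $ k / lfun nu lam j x) (at 0)" if "j < r" for j
  proof -
    have "lfun nu lam j x > 0" using pos \<open>x \<in> S\<close> that by auto
    then have "((\<lambda>t. nu j $ k * (ln (lfun nu lam j x + t * nu j $ i) + 1))
        has_real_derivative nu j $ k * (nu j $ i / lfun nu lam j x + 0)) (at 0)"
      by (intro DERIV_cmult DERIV_add has_real_derivative_ln_line DERIV_const)
    then show ?thesis unfolding lfun_add_scaleR_axis by (simp add: field_simps)
  qed
  then have "((\<lambda>t. \<Sum>j<r. nu j $ k * (ln (lfun nu lam j (x + t *\<^sub>R axis i 1)) + 1))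
      has_real_derivative (\<Sum>j<r. nu j $ i * nu j $ k / lfun nu lam j x)) (at 0)"
    by (intro DERIV_sum) auto
  moreover have "((\<lambda>t. pd [k] psi (x + t *\<^sub>R axis i 1)) has_real_derivative pd [i, k] psi x) (at 0)"
    using \<open>S \<subseteq> W\<close> \<open>x \<in> S\<close> by (intro has_real_derivative_pd_axis[OF psi]) auto
  ultimately have "((\<lambda>t. F (x + t *\<^sub>R axis i 1)) has_real_derivative
      (1/2) * (\<Sum>j<r. nu j $ i * nu j $ k / lfun nu lam j x) + s * pd [i, k] psi x) (at 0)"
    unfolding F_def by (intro DERIV_add DERIV_cmult)
  moreover have "open ((\<lambda>t::real. x + t *\<^sub>R axis i 1) -` S)"
    using \<open>open S\<close> by (intro continuous_open_vimage) (auto intro!: continuous_intros)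
  ultimately have "((\<lambda>t. pd [k] (\<lambda>y. gP nu lam r y + s * psi y) (x + t *\<^sub>R axis i 1))
      has_real_derivative (1/2) * (\<Sum>j<r. nu j $ i * nu j $ k / lfun nu lam j x) + s * pd [i, k] psi x) (at 0)"
    by (rule has_field_derivative_transform_within_open) (use \<open>x \<in> S\<close> F_eq in auto)
  then show ?thesis
    by (simp add: DERIV_imp_deriv)
qed

definition gP_hess :: "(nat \<Rightarrow> real^'n::finite) \<Rightarrow> (nat \<Rightarrow> real) \<Rightarrow> nat \<Rightarrow> real^'n \<Rightarrow> real^'n^'n" where
  "gP_hess nu lam r x = (\<chi> i k. (1/2) * (\<Sum>j<r. nu j $ i * nu j $ k / lfun nu lam j x))"

lemma hess_gP_plus:
  fixes nu :: "nat \<Rightarrow> real^'n::finite"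
  assumes "open S" and "x \<in> S" and "\<forall>y\<in>S. \<forall>j<r. lfun nu lam j y > 0"
    and "S \<subseteq> W" and "smooth_on W psi"
  shows "hess (\<lambda>y. gP nu lam r y + s * psi y) x = gP_hess nu lam r x + s *\<^sub>R hess psi x"
  using pd2_gP_plus[OF assms] by (simp add: hess_def gP_hess_def vec_eq_iff)

lemma transpose_gP_hess: "transpose (gP_hess nu lam r x) = gP_hess nu lam r x"
  by (simp add: gP_hess_def transpose_def vec_eq_iff mult.commute)

lemma inner_gP_hess:
  fixes nu :: "nat \<Rightarrow> real^'n::finite"
  shows "y \<bullet> (gP_hess nu lam r x *v y) = (\<Sum>j<r. (nu j \<bullet> y)^2 / (2 * lfun nu lam j x))"
proof -
  have "y \<bullet> (gP_hess nu lam r x *v y) =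
      (\<Sum>j<r. \<Sum>i\<in>UNIV. \<Sum>k\<in>UNIV. y $ i * y $ k * nu j $ i * nu j $ k / (2 * lfun nu lam j x))"
    by (simp add: gP_hess_def inner_vec_def matrix_vector_mult_def sum_distrib_left
        sum.swap[of _ UNIV "{..<r}"] algebra_simps)
  also have "\<dots> = (\<Sum>j<r. (nu j \<bullet> y)^2 / (2 * lfun nu lam j x))"
    by (simp add: inner_vec_def power2_eq_square sum_distrib_left sum_distrib_right
        sum_divide_distrib algebra_simps)
  finally show ?thesis .
qed

lemma inner_matrix_add_scaleR:
  fixes A B :: "real^'n::finite^'n"
  shows "y \<bullet> ((A + s *\<^sub>R B) *v y) = y \<bullet> (A *v y) + s * (y \<bullet> (B *v y))"
  by (simp add: matrix_vector_mult_add_rdistrib inner_add_right matrix_vector_mult_def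
      inner_vec_def sum_distrib_left sum.distrib algebra_simps)

lemma abs_inner_matrix_vector_le:
  fixes A :: "real^'n::finite^'n"
  shows "\<bar>y \<bullet> (A *v y)\<bar> \<le> (\<Sum>i\<in>UNIV. \<Sum>k\<in>UNIV. \<bar>A $ i $ k\<bar>) * (norm y)^2"
proof -
  have "\<bar>y \<bullet> (A *v y)\<bar> = \<bar>\<Sum>i\<in>UNIV. \<Sum>k\<in>UNIV. A $ i $ k * (y $ i * y $ k)\<bar>"
    by (simp add: inner_vec_def matrix_vector_mult_def sum_distrib_left algebra_simps)
  also have "\<dots> \<le> (\<Sum>i\<in>UNIV. \<Sum>k\<in>UNIV. \<bar>A $ i $ k\<bar> * \<bar>y $ i * y $ k\<bar>)"
    by (rule order_trans[OF sum_abs sum_mono[OF order_trans[OF sum_abs]]]) (simp add: abs_mult)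
  also have "\<dots> \<le> (\<Sum>i\<in>UNIV. \<Sum>k\<in>UNIV. \<bar>A $ i $ k\<bar> * (norm y)^2)"
    by (intro sum_mono mult_left_mono)
      (simp_all add: abs_mult power2_eq_square mult_mono component_le_norm_cart)
  finally show ?thesis
    by (simp add: sum_distrib_right)
qed

lemma transpose_add_scaleR:
  fixes A B :: "real^'n::finite^'n"
  shows "transpose (A + s *\<^sub>R B) = transpose A + s *\<^sub>R transpose B"
  by (simp add: transpose_def vec_eq_iff)

lemma sum_inner_squares_coercive:
  fixes w :: "'i \<Rightarrow> 'a::euclidean_space"
  assumes "finite J" and spans: "\<And>u. u \<noteq> 0 \<Longrightarrow> \<exists>j\<in>J. w j \<bullet> u \<noteq> 0"
  obtains c where "c > 0" "\<And>y. c * (norm y)^2 \<le> (\<Sum>j\<in>J. (w j \<bullet> y)^2)"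
proof -
  define f where "f y = (\<Sum>j\<in>J. (w j \<bullet> y)^2)" for y
  have f_pos: "f u > 0" if nonzero: "u \<noteq> 0" for u
  proof -
    obtain j where "j \<in> J" "w j \<bullet> u \<noteq> 0" using spans[OF nonzero] by blast
    then show ?thesis unfolding f_def by (intro sum_pos2[OF \<open>finite J\<close>]) auto
  qed
  have "continuous_on (sphere 0 1) f" unfolding f_def by (intro continuous_intros)
  moreover have "sphere (0::'a) 1 \<noteq> {}" by simp
  ultimately obtain u0 where u0: "u0 \<in> sphere 0 1" and min: "\<And>u. u \<in> sphere 0 1 \<Longrightarrow> f u0 \<le> f u"
    using continuous_attains_inf[OF compact_sphere] by blast
  have scale: "f (a *\<^sub>R u) = a^2 * f u" for a u
    by (simp add: f_def inner_scaleR_right power_mult_distrib sum_distrib_left)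
  show ?thesis
  proof
    show "f u0 > 0" using u0 by (intro f_pos) auto
  next
    fix y :: 'a
    show "f u0 * (norm y)^2 \<le> (\<Sum>j\<in>J. (w j \<bullet> y)^2)"
    proof (cases "y = 0")
      case False
      then have "(1 / norm y) *\<^sub>R y \<in> sphere 0 1" by simp
      then have "f u0 \<le> f ((1 / norm y) *\<^sub>R y)" by (rule min)
      also have "\<dots> = f y / (norm y)^2" by (simp add: scale power_divide)
      finally have "f u0 * (norm y)^2 \<le> f y" using False by (simp add: pos_le_divide_eq)
      then show ?thesis by (simp add: f_def)
    qed simp
  qed
qed

lemma convex_polytope_of: "convex (polytope_of nu lam r)"
proof -
  have "{x. 0 \<le> lfun nu lam j x} = {x. nu j \<bullet> x \<ge> - lam j}" for j
    by (auto simp: lfun_def)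
  moreover have "polytope_of nu lam r = (\<Inter>j<r. {x. 0 \<le> lfun nu lam j x})"
    by (auto simp: polytope_of_def)
  ultimately show ?thesis
    by (simp add: convex_INT convex_halfspace_ge)
qed

lemma primitive_vec_nonzero:
  assumes "primitive_vec z"
  shows "z \<noteq> 0"
proof
  assume "z = 0"
  then have "integral_vec ((1 / of_int 2) *\<^sub>R z)"
    by (simp add: integral_vec_def)
  moreover have "\<forall>k::int. k > 0 \<longrightarrow> integral_vec ((1 / of_int k) *\<^sub>R z) \<longrightarrow> k = 1"
    using assms unfolding primitive_vec_def by blast
  ultimately have "(2::int) = 1"
    by (meson zero_less_numeral)
  then show False by simp
qed

lemma lfun_pos_interior:
  assumes "x \<in> interior (polytope_of nu lam r)" and "j < r" and "nu j \<noteq> 0"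
  shows "lfun nu lam j x > 0"
proof -
  have "polytope_of nu lam r \<subseteq> {x. nu j \<bullet> x \<ge> - lam j}"
    using \<open>j < r\<close> by (auto simp: polytope_of_def lfun_def)
  then have "interior (polytope_of nu lam r) \<subseteq> {x. nu j \<bullet> x > - lam j}"
    using interior_mono interior_halfspace_ge[OF \<open>nu j \<noteq> 0\<close>] by blast
  then show ?thesis
    using assms(1) by (auto simp: lfun_def)
qed

lemma delzant_vertex_normals_span:
  fixes nu :: "nat \<Rightarrow> real^'n::finite"
  assumes "delzant nu lam r" and "v extreme_point_of polytope_of nu lam r" and "u \<noteq> 0"
  shows "\<exists>j\<in>{j. j < r \<and> lfun nu lam j v = 0}. nu j \<bullet> u \<noteq> 0"
proof (rule ccontr)
  define J where "J = {j. j < r \<and> lfun nu lam j v = 0}"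
  assume "\<not> (\<exists>j\<in>J. nu j \<bullet> u \<noteq> 0)"
  then have orth: "\<forall>j\<in>J. nu j \<bullet> u = 0" by auto
  have "u $ i = 0" for i
  proof -
    have "integral_vec (axis i (1::real))"
      unfolding integral_vec_def axis_def by auto
    then obtain c :: "nat \<Rightarrow> int" where "axis i 1 = (\<Sum>j\<in>J. of_int (c j) *\<^sub>R nu j)"
      using assms(1,2) unfolding delzant_def Let_def J_def by blast
    then have "axis i 1 \<bullet> u = (\<Sum>j\<in>J. of_int (c j) * (nu j \<bullet> u))"
      by (simp add: inner_sum_left)
    then show ?thesis
      using orth by (simp add: inner_axis')
  qed
  then show False
    using \<open>u \<noteq> 0\<close> by (simp add: vec_eq_iff)
qed

lemma quadratic_form_dominated_by_small_facets:
  fixes nu :: "nat \<Rightarrow> real^'n::finite" and B :: "real^'n^'n"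
  assumes "J \<subseteq> {..<r}" and d_pos: "\<forall>j<r. d j > 0"
    and "c > 0" and coercive: "c * (norm y)^2 \<le> (\<Sum>j\<in>J. (nu j \<bullet> y)^2)" and "y \<noteq> 0"
    and B_bound: "(\<Sum>i\<in>UNIV. \<Sum>k\<in>UNIV. \<bar>B $ i $ k\<bar>) \<le> K"
    and small: "(\<Sum>j\<in>J. d j) * (2 * \<bar>s\<bar> * K + 1) < c"
  shows "0 < (\<Sum>j<r. (nu j \<bullet> y)^2 / (2 * d j)) + s * (y \<bullet> (B *v y))"
proof -
  define m where "m = (\<Sum>j\<in>J. d j)"
  define n2 where "n2 = (norm y)^2"
  have "finite J" using \<open>J \<subseteq> {..<r}\<close> finite_subset by blast
  have n2_pos: "n2 > 0" using \<open>y \<noteq> 0\<close> by (simp add: n2_def)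
  have "0 \<le> (\<Sum>i\<in>UNIV. \<Sum>k\<in>UNIV. \<bar>B $ i $ k\<bar>)" by (intro sum_nonneg) simp
  then have K_nonneg: "K \<ge> 0" using B_bound by linarith
  have d_le_m: "d j \<le> m" if "j \<in> J" for j
    unfolding m_def using \<open>finite J\<close> that \<open>J \<subseteq> {..<r}\<close> d_pos
    by (intro member_le_sum) (auto intro: less_imp_le)
  have "J \<noteq> {}"
  proof
    assume "J = {}"
    then have "c * n2 \<le> 0" using coercive by (simp add: n2_def)
    then show False using \<open>c > 0\<close> n2_pos by (simp add: mult_le_0_iff)
  qed
  then obtain j0 where "j0 \<in> J" by blast
  then have "0 < d j0" using d_pos \<open>J \<subseteq> {..<r}\<close> by auto
  then have m_pos: "m > 0" using d_le_m[OF \<open>j0 \<in> J\<close>] by linarith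
  have "c * n2 / (2 * m) \<le> (\<Sum>j\<in>J. (nu j \<bullet> y)^2) / (2 * m)"
    using coercive m_pos by (simp add: n2_def divide_right_mono)
  also have "\<dots> = (\<Sum>j\<in>J. (nu j \<bullet> y)^2 / (2 * m))"
    by (simp add: sum_divide_distrib)
  also have "\<dots> \<le> (\<Sum>j\<in>J. (nu j \<bullet> y)^2 / (2 * d j))"
    using d_le_m d_pos \<open>J \<subseteq> {..<r}\<close> m_pos by (intro sum_mono divide_left_mono) auto
  also have "\<dots> \<le> (\<Sum>j<r. (nu j \<bullet> y)^2 / (2 * d j))"
    using \<open>J \<subseteq> {..<r}\<close> d_pos by (intro sum_mono2) auto
  finally have facets: "c * n2 / (2 * m) \<le> (\<Sum>j<r. (nu j \<bullet> y)^2 / (2 * d j))" .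
  have "\<bar>y \<bullet> (B *v y)\<bar> \<le> (\<Sum>i\<in>UNIV. \<Sum>k\<in>UNIV. \<bar>B $ i $ k\<bar>) * n2"
    unfolding n2_def by (rule abs_inner_matrix_vector_le)
  also have "\<dots> \<le> K * n2"
    using B_bound n2_pos by (intro mult_right_mono) auto
  finally have "\<bar>y \<bullet> (B *v y)\<bar> \<le> K * n2" .
  then have "\<bar>s * (y \<bullet> (B *v y))\<bar> \<le> \<bar>s\<bar> * K * n2"
    by (simp add: abs_mult mult.assoc mult_left_mono)
  moreover have "\<bar>s\<bar> * K * n2 < c * n2 / (2 * m)"
  proof -
    have "2 * m * (\<bar>s\<bar> * K) < c" using small m_pos by (simp add: m_def algebra_simps)
    then have "\<bar>s\<bar> * K * n2 * (2 * m) < c * n2"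
      using n2_pos by (simp add: algebra_simps)
    then show ?thesis
      using m_pos by (simp add: pos_less_divide_eq)
  qed
  ultimately show ?thesis
    using facets by linarith
qed

lemma pos_def_hess_gP_plus_interior:
  fixes nu :: "nat \<Rightarrow> real^'n::finite"
  assumes normals: "\<forall>j<r. nu j \<noteq> 0"
    and "polytope_of nu lam r \<subseteq> W" and "smooth_on W psi"
    and x: "x \<in> interior (polytope_of nu lam r)"
    and sym: "transpose (hess psi x) = hess psi x"
    and J: "J \<subseteq> {..<r}" and "c > 0" and coercive: "\<And>y. c * (norm y)^2 \<le> (\<Sum>j\<in>J. (nu j \<bullet> y)^2)"
    and hess_bound: "(\<Sum>i\<in>UNIV. \<Sum>k\<in>UNIV. \<bar>hess psi x $ i $ k\<bar>) \<le> K"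
    and small: "(\<Sum>j\<in>J. lfun nu lam j x) * (2 * \<bar>s\<bar> * K + 1) < c"
  shows "pos_def (hess (\<lambda>y. gP nu lam r y + s * psi y) x)"
proof -
  have pos: "\<forall>y\<in>interior (polytope_of nu lam r). \<forall>j<r. lfun nu lam j y > 0"
    using normals lfun_pos_interior by blast
  have "interior (polytope_of nu lam r) \<subseteq> W"
    using \<open>polytope_of nu lam r \<subseteq> W\<close> interior_subset by blast
  then have hess_eq: "hess (\<lambda>y. gP nu lam r y + s * psi y) x = gP_hess nu lam r x + s *\<^sub>R hess psi x"
    using hess_gP_plus[OF open_interior x pos] \<open>smooth_on W psi\<close> by blast
  have "0 < y \<bullet> ((gP_hess nu lam r x + s *\<^sub>R hess psi x) *v y)" if "y \<noteq> 0" for y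
    unfolding inner_matrix_add_scaleR inner_gP_hess
    using pos x J \<open>c > 0\<close> coercive hess_bound small that
    by (intro quadratic_form_dominated_by_small_facets) auto
  then show ?thesis
    unfolding pos_def_def hess_eq by (simp add: transpose_add_scaleR transpose_gP_hess sym)
qed

lemma eventually_nhds_hess_abs_sum_less:
  assumes "smooth_on W psi" and "v \<in> W"
  shows "\<forall>\<^sub>F x in nhds v. (\<Sum>i\<in>UNIV. \<Sum>k\<in>UNIV. \<bar>hess psi x $ i $ k\<bar>)
                         < (\<Sum>i\<in>UNIV. \<Sum>k\<in>UNIV. \<bar>hess psi v $ i $ k\<bar>) + 1"
proof -
  define H where "H x = (\<Sum>i\<in>UNIV. \<Sum>k\<in>UNIV. \<bar>hess psi x $ i $ k\<bar>)" for x
  have "isCont (pd [i, k] psi) v" for i k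
    using assms continuous_on_eq_continuous_at unfolding smooth_on_def by blast
  then have "isCont H v"
    unfolding H_def by (simp add: hess_def continuous_intros)
  then have "\<forall>\<^sub>F x in nhds v. H x < H v + 1"
    unfolding isCont_def tendsto_at_iff_tendsto_nhds by (rule order_tendstoD) simp
  then show ?thesis
    unfolding H_def .
qed

lemma eventually_nhds_active_lfun_sum_less:
  assumes "e > 0"
  shows "\<forall>\<^sub>F x in nhds v. (\<Sum>j\<in>{j. j < r \<and> lfun nu lam j v = 0}. lfun nu lam j x) < e"
proof -
  have "((\<lambda>x. \<Sum>j\<in>{j. j < r \<and> lfun nu lam j v = 0}. lfun nu lam j x) \<longlongrightarrow>
      (\<Sum>j\<in>{j. j < r \<and> lfun nu lam j v = 0}. lfun nu lam j v)) (nhds v)"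
    unfolding lfun_def by (intro tendsto_intros filterlim_ident)
  then show ?thesis
    using assms by (intro order_tendstoD) simp_all
qed

lemma pos_def_hess_gP_plus_near_vertex:
  fixes nu :: "nat \<Rightarrow> real^'n::finite"
  assumes delzant: "delzant nu lam r" and "polytope_of nu lam r \<subseteq> W" and "smooth_on W psi"
    and sym: "\<forall>x\<in>polytope_of nu lam r. transpose (hess psi x) = hess psi x"
    and vertex: "v extreme_point_of polytope_of nu lam r"
  obtains \<delta> where "\<delta> > 0" and
    "\<And>x. x \<in> ball v \<delta> \<inter> interior (polytope_of nu lam r) \<Longrightarrow>
       pos_def (hess (\<lambda>y. gP nu lam r y + s * psi y) x)"
proof -
  define J where "J = {j. j < r \<and> lfun nu lam j v = 0}"
  have "J \<subseteq> {..<r}" by (auto simp: J_def)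
  obtain c where "c > 0" and coercive: "\<And>y. c * (norm y)^2 \<le> (\<Sum>j\<in>J. (nu j \<bullet> y)^2)"
    using sum_inner_squares_coercive[of J nu] delzant_vertex_normals_span[OF delzant vertex]
    unfolding J_def by auto
  define H where "H x = (\<Sum>i\<in>UNIV. \<Sum>k\<in>UNIV. \<bar>hess psi x $ i $ k\<bar>)" for x
  define K where "K = H v + 1"
  have "K > 0"
    unfolding K_def H_def by (intro add_nonneg_pos sum_nonneg) auto
  then have "0 < 2 * \<bar>s\<bar> * K + 1"
    by (intro add_nonneg_pos) auto
  have "v \<in> W"
    using vertex \<open>polytope_of nu lam r \<subseteq> W\<close> by (auto simp: extreme_point_of_def)
  then have "\<forall>\<^sub>F x in nhds v. H x < K"
    unfolding H_def K_def by (rule eventually_nhds_hess_abs_sum_less[OF \<open>smooth_on W psi\<close>])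
  moreover have "\<forall>\<^sub>F x in nhds v. (\<Sum>j\<in>J. lfun nu lam j x) < c / (2 * \<bar>s\<bar> * K + 1)"
    unfolding J_def using \<open>c > 0\<close> \<open>0 < 2 * \<bar>s\<bar> * K + 1\<close>
    by (intro eventually_nhds_active_lfun_sum_less divide_pos_pos)
  ultimately have "\<forall>\<^sub>F x in nhds v. H x < K \<and> (\<Sum>j\<in>J. lfun nu lam j x) < c / (2 * \<bar>s\<bar> * K + 1)"
    by (rule eventually_conj)
  then obtain \<delta> where "\<delta> > 0" and near: "\<And>x. dist x v < \<delta> \<Longrightarrow> H x < K \<and>
      (\<Sum>j\<in>J. lfun nu lam j x) < c / (2 * \<bar>s\<bar> * K + 1)"
    unfolding eventually_nhds_metric by blast
  have normals: "\<forall>j<r. nu j \<noteq> 0"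
    using delzant primitive_vec_nonzero unfolding delzant_def Let_def by blast
  show ?thesis
  proof (rule that[OF \<open>\<delta> > 0\<close>])
    fix x
    assume x: "x \<in> ball v \<delta> \<inter> interior (polytope_of nu lam r)"
    then have "x \<in> polytope_of nu lam r" using interior_subset by blast
    have "H x < K" and "(\<Sum>j\<in>J. lfun nu lam j x) * (2 * \<bar>s\<bar> * K + 1) < c"
      using near[of x] x \<open>0 < 2 * \<bar>s\<bar> * K + 1\<close> by (auto simp: dist_commute pos_less_divide_eq)
    then show "pos_def (hess (\<lambda>y. gP nu lam r y + s * psi y) x)"
      using x sym \<open>x \<in> polytope_of nu lam r\<close> unfolding H_def
      by (intro pos_def_hess_gP_plus_interior[OF normals assms(2,3) _ _ \<open>J \<subseteq> {..<r}\<close> \<open>c > 0\<close> coercive])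
        auto
  qed
qed

theorem mainTheorem9:
  fixes nu :: "nat \<Rightarrow> real^'n" and lam :: "nat \<Rightarrow> real" and r :: nat
    and psi :: "real^'n \<Rightarrow> real" and s :: real and v :: "real^'n"
  assumes "delzant nu lam r"
    and "\<exists>W. polytope_of nu lam r \<subseteq> W \<and> smooth_on W psi"
    and "\<forall>x\<in>polytope_of nu lam r. pos_def (hess psi x)"
    and "v extreme_point_of polytope_of nu lam r"
  shows "\<exists>U. openin (top_of_set (polytope_of nu lam r)) U \<and> connected U \<and> v \<in> U \<and>
           (\<forall>x\<in>U \<inter> interior (polytope_of nu lam r).
              pos_def (hess (\<lambda>y. gP nu lam r y + s * psi y) x))"
proof -
  define P where "P = polytope_of nu lam r"
  obtain W where "P \<subseteq> W" and "smooth_on W psi"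
    using assms(2) unfolding P_def by blast
  have "\<forall>x\<in>P. transpose (hess psi x) = hess psi x"
    using assms(3) unfolding P_def pos_def_def by blast
  then obtain \<delta> where "\<delta> > 0" and island: "\<And>x. x \<in> ball v \<delta> \<inter> interior P \<Longrightarrow>
      pos_def (hess (\<lambda>y. gP nu lam r y + s * psi y) x)"
    using pos_def_hess_gP_plus_near_vertex[OF assms(1) _ \<open>smooth_on W psi\<close> _ assms(4)] \<open>P \<subseteq> W\<close>
    unfolding P_def by blast
  have "v \<in> P"
    using assms(4) unfolding P_def extreme_point_of_def by blast
  show ?thesis
    unfolding P_def[symmetric]
  proof (intro exI[of _ "P \<inter> ball v \<delta>"] conjI ballI)
    show "openin (top_of_set P) (P \<inter> ball v \<delta>)"
      by (simp add: openin_open_Int)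
    show "connected (P \<inter> ball v \<delta>)"
      unfolding P_def by (intro convex_connected convex_Int convex_polytope_of convex_ball)
    show "v \<in> P \<inter> ball v \<delta>"
      using \<open>v \<in> P\<close> \<open>\<delta> > 0\<close> by simp
  qed (use island in auto)
qed

end
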